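(* Let $a,A$ be real with $a+3>0$ and $\frac{a+3}{2}=\frac{2}{A+3}$, and let $\xi,\eta,\mu$ be real. Then the general polynomial potentials $$U(r)=\xi r^{a+1}+\mu r^{2\left(\sqrt{\frac{a+3}{2}}-1\right)},\qquad V(\rho)=\eta\rho^{A+1}+\mu\left(\frac{A+3}{2}\right)^{2}\rho^{2\left(\sqrt{\frac{A+3}{2}}-1\right)}$$ are quantum Newtonianly dual, in the following sense: if $\mathcal{E}$ is real, $l,\ell$ are real with $l+\frac12=\frac{2}{A+3}(\ell+\frac12)$, $\xi=-\mathcal{E}\left(\frac{2}{A+3}\right)^2$, $E=-\eta\left(\frac{2}{A+3}\right)^2$, and $u\in C^2((0,\infty))$ solves $u''+\left[E-\frac{l(l+1)}{r^2}-U(r)\right]u=0$, then $v(\rho)=\rho^{-(A+1)/4}u\left(\rho^{(A+3)/2}\right)$ solves $v''+\left[\mathcal{E}-\frac{\ell(\ell+1)}{\rho^2}-V(\rho)\right]v=0$ on $(0,\infty)$. Moreover, $\xi r^{a+1}$ is the Newton dual of $\eta\rho^{A+1}$, and $\mu r^{2(\sqrt{(a+3)/2}-1)}$ is the Newton dual of $\mu\left(\frac{A+3}{2}\right)^2\rho^{2(\sqrt{(A+3)/2}-1)}$; i.e. with $b=2\sqrt{\frac{a+3}{2}}-3$ and $B=2\sqrt{\frac{A+3}{2}}-3$ one also has $\frac{b+3}{2}=\frac{2}{B+3}$.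
   Context: Three-dimensional radial equation (units $\hbar=2m=1$): $u''+\left[E-\frac{l(l+1)}{r^2}-W(r)\right]u=0$ for a central potential $W$. Two power potentials $\xi r^{\alpha+1}$ and $\eta\rho^{\beta+1}$ are Newtonianly dual when $\frac{\alpha+3}{2}=\frac{2}{\beta+3}$. *)

theory Defs
  imports Complex_Main
begin

text \<open>Power potentials xi r^(alpha+1) and eta rho^(beta+1) are Newtonianly dual
  when (alpha+3)/2 = 2/(beta+3).\<close>
definition newton_dual :: "real \<Rightarrow> real \<Rightarrow> bool" where
  "newton_dual \<alpha> \<beta> \<longleftrightarrow> (\<alpha> + 3) / 2 = 2 / (\<beta> + 3)"

definition solves_radial :: "(real \<Rightarrow> real) \<Rightarrow> real \<Rightarrow> real \<Rightarrow> (real \<Rightarrow> real) \<Rightarrow> bool" where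
  "solves_radial W E l u \<longleftrightarrow>
     (\<exists>u' u''. (\<forall>r>0. (u has_real_derivative u' r) (at r)
                      \<and> (u' has_real_derivative u'' r) (at r)
                      \<and> u'' r + (E - l * (l + 1) / r\<^sup>2 - W r) * u r = 0)
              \<and> continuous_on {0<..} u'')"

end

theory Submission imports Defs begin

text \<open>The substitution \<open>r = \<rho>\<^sup>p\<close>, \<open>v(\<rho>) = \<rho>\<^bsup>(1-p)/2\<^esup> u(\<rho>\<^sup>p)\<close> is chosen so that the
  first-derivative terms of \<open>v''\<close> cancel; the radial equation for \<open>u\<close> with \<open>(E, l, W)\<close> then
  becomes a radial equation for \<open>v\<close> with \<open>(EE, ll, V)\<close> as soon as \<open>p(l + 1/2) = ll + 1/2\<close>
  and \<open>\<rho>\<^sup>2 (EE - V \<rho>) = p\<^sup>2 r\<^sup>2 (E - W r)\<close>. For the dual power potentials of the theorem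
  (with \<open>p = (A+3)/2\<close>) the energy and coupling constant trade places in this identity,
  because \<open>r\<^bsup>a+3\<^esup> = \<rho>\<^sup>2\<close> and \<open>r\<^sup>2 = \<rho>\<^bsup>A+3\<^esup>\<close>.\<close>

lemma DERIV_powr_mult_comp_powr:
  fixes f :: "real \<Rightarrow> real"
  assumes x: "x > 0" and f: "(f has_real_derivative f') (at (x powr p))"
  shows "((\<lambda>y. y powr k * f (y powr p)) has_real_derivative
           k * x powr (k - 1) * f (x powr p) + p * x powr (k + p - 1) * f') (at x)"
proof -
  have "((\<lambda>y. f (y powr p)) has_real_derivative f' * (p * x powr (p - 1))) (at x)"
    using DERIV_chain2[OF f has_real_derivative_powr[OF x]] .
  from DERIV_mult[OF has_real_derivative_powr[OF x, of k] this]
  show ?thesis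
    using x by (simp add: powr_add[symmetric] algebra_simps)
qed

lemma DERIV_liouville_second:
  fixes u u' :: "real \<Rightarrow> real"
  assumes x: "x > 0" and k: "2 * k + p - 1 = 0"
    and u: "(u has_real_derivative u' (x powr p)) (at (x powr p))"
    and u': "(u' has_real_derivative u'') (at (x powr p))"
  shows "((\<lambda>y. k * y powr (k - 1) * u (y powr p) + p * y powr (k + p - 1) * u' (y powr p))
           has_real_derivative
           k * (k - 1) * x powr (k - 2) * u (x powr p) + p\<^sup>2 * x powr (k + 2 * p - 2) * u'') (at x)"
proof -
  have derivative: "((\<lambda>y. k * y powr (k - 1) * u (y powr p) + p * y powr (k + p - 1) * u' (y powr p))
          has_real_derivative
          k * ((k - 1) * x powr (k - 2) * u (x powr p) + p * x powr (k + p - 2) * u' (x powr p))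
        + p * ((k + p - 1) * x powr (k + p - 2) * u' (x powr p) + p * x powr (k + 2 * p - 2) * u''))
        (at x)"
    using DERIV_add[OF DERIV_cmult[OF DERIV_powr_mult_comp_powr[OF x u, of "k - 1"], of k]
                       DERIV_cmult[OF DERIV_powr_mult_comp_powr[OF x u', of "k + p - 1"], of p]]
    by (simp add: algebra_simps)
  have "p * (2 * k + p - 1) * (x powr (k + p - 2) * u' (x powr p)) = 0"
    using k by simp
  with derivative show ?thesis
    by (elim DERIV_cong) (simp add: algebra_simps power2_eq_square)
qed

lemma power2_mult_powr:
  fixes x :: real
  assumes "x > 0"
  shows "x\<^sup>2 * x powr c = x powr (c + 2)"
  using assms by (simp add: powr_add flip: powr_numeral)

lemma solves_radial_liouville_transform:
  fixes W V :: "real \<Rightarrow> real"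
  assumes sol: "solves_radial W E l u" and p: "p > 0"
    and angular: "p * (l + 1/2) = ll + 1/2"
    and potential: "\<And>\<rho>. \<rho> > 0 \<Longrightarrow>
                      \<rho>\<^sup>2 * (EE - V \<rho>) = p\<^sup>2 * (\<rho> powr p)\<^sup>2 * (E - W (\<rho> powr p))"
  shows "solves_radial V EE ll (\<lambda>\<rho>. \<rho> powr ((1 - p) / 2) * u (\<rho> powr p))"
proof -
  obtain u' u'' where
    u: "\<And>r. r > 0 \<Longrightarrow> (u has_real_derivative u' r) (at r)"
      "\<And>r. r > 0 \<Longrightarrow> (u' has_real_derivative u'' r) (at r)"
      "\<And>r. r > 0 \<Longrightarrow> u'' r + (E - l * (l + 1) / r\<^sup>2 - W r) * u r = 0"
    and u''_cont: "continuous_on {0<..} u''"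
    using sol unfolding solves_radial_def by blast
  define k where "k = (1 - p) / 2"
  have k: "2 * k + p - 1 = 0" by (simp add: k_def field_simps)
  have centrifugal: "k * (k - 1) + p\<^sup>2 * (l * (l + 1)) = ll * (ll + 1)"
  proof -
    have "k * (k - 1) = (p\<^sup>2 - 1) / 4"
      by (simp add: k_def field_simps power2_eq_square)
    moreover have "p\<^sup>2 * (l * (l + 1)) = (p * (l + 1/2))\<^sup>2 - p\<^sup>2 / 4"
      by (simp add: algebra_simps power2_eq_square)
    ultimately show ?thesis
      unfolding angular by (simp add: algebra_simps power2_eq_square)
  qed
  have u_cont: "continuous_on {0<..} u"
    using u(1) by (meson DERIV_isCont continuous_at_imp_continuous_on greaterThan_iff)
  have powr_cont: "continuous_on {0<..} (\<lambda>x::real. x powr p)"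
    by (intro continuous_intros) auto
  have powr_maps: "(\<lambda>x::real. x powr p) ` {0<..} \<subseteq> {0<..}" by auto
  show ?thesis
    unfolding solves_radial_def k_def[symmetric]
  proof (intro exI conjI allI impI)
    fix \<rho> :: real assume \<rho>: "\<rho> > 0"
    define R where "R = \<rho> powr p"
    have R: "R > 0" using \<rho> by (simp add: R_def)
    show "((\<lambda>x. x powr k * u (x powr p)) has_real_derivative
            k * \<rho> powr (k - 1) * u (\<rho> powr p) + p * \<rho> powr (k + p - 1) * u' (\<rho> powr p)) (at \<rho>)"
      using DERIV_powr_mult_comp_powr[OF \<rho> u(1)] R by (simp add: R_def)
    show "((\<lambda>x. k * x powr (k - 1) * u (x powr p) + p * x powr (k + p - 1) * u' (x powr p))
            has_real_derivative
            k * (k - 1) * \<rho> powr (k - 2) * u (\<rho> powr p) + p\<^sup>2 * \<rho> powr (k + 2 * p - 2) * u'' (\<rho> powr p))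
            (at \<rho>)"
      using DERIV_liouville_second[OF \<rho> k u(1) u(2)] R by (simp add: R_def)
    have u'': "p\<^sup>2 * R\<^sup>2 * u'' R = (p\<^sup>2 * (l * (l + 1)) - p\<^sup>2 * R\<^sup>2 * (E - W R)) * u R"
    proof -
      have "R\<^sup>2 * u'' R = (l * (l + 1) - R\<^sup>2 * (E - W R)) * u R"
        using u(3)[OF R] R by (simp add: field_simps)
      then have "p\<^sup>2 * (R\<^sup>2 * u'' R) = p\<^sup>2 * ((l * (l + 1) - R\<^sup>2 * (E - W R)) * u R)"
        by simp
      then show ?thesis
        by (simp add: algebra_simps)
    qed
    have V: "(EE - ll * (ll + 1) / \<rho>\<^sup>2 - V \<rho>) * \<rho>\<^sup>2 = p\<^sup>2 * R\<^sup>2 * (E - W R) - ll * (ll + 1)"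
    proof -
      have "ll * (ll + 1) / \<rho>\<^sup>2 * \<rho>\<^sup>2 = ll * (ll + 1)"
        using \<rho> by simp
      then have "(EE - ll * (ll + 1) / \<rho>\<^sup>2 - V \<rho>) * \<rho>\<^sup>2 = \<rho>\<^sup>2 * (EE - V \<rho>) - ll * (ll + 1)"
        by (simp only: left_diff_distrib right_diff_distrib mult.commute)
      then show ?thesis
        using potential[OF \<rho>] by (simp add: R_def)
    qed
    have "R\<^sup>2 = \<rho> powr (2 * p)"
      using \<rho> by (simp add: R_def powr_mult_base power2_eq_square flip: powr_add)
    then have powers: "\<rho> powr (k + 2 * p - 2) = \<rho> powr (k - 2) * R\<^sup>2"
        "\<rho> powr k = \<rho> powr (k - 2) * \<rho>\<^sup>2"
      using \<rho> by (simp_all add: algebra_simps flip: powr_add powr_numeral)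
    have "k * (k - 1) * \<rho> powr (k - 2) * u (\<rho> powr p) + p\<^sup>2 * \<rho> powr (k + 2 * p - 2) * u'' (\<rho> powr p)
        + (EE - ll * (ll + 1) / \<rho>\<^sup>2 - V \<rho>) * (\<rho> powr k * u (\<rho> powr p))
        = \<rho> powr (k - 2) * (k * (k - 1) * u R + p\<^sup>2 * R\<^sup>2 * u'' R
            + (EE - ll * (ll + 1) / \<rho>\<^sup>2 - V \<rho>) * \<rho>\<^sup>2 * u R)"
      unfolding powers R_def[symmetric] by (simp add: algebra_simps)
    also have "\<dots> = \<rho> powr (k - 2) * u R * (k * (k - 1) + p\<^sup>2 * (l * (l + 1)) - ll * (ll + 1))"
      unfolding u'' V by (simp add: algebra_simps)
    also have "\<dots> = 0"
      using centrifugal by simp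
    finally show "k * (k - 1) * \<rho> powr (k - 2) * u (\<rho> powr p) + p\<^sup>2 * \<rho> powr (k + 2 * p - 2) * u'' (\<rho> powr p)
        + (EE - ll * (ll + 1) / \<rho>\<^sup>2 - V \<rho>) * (\<rho> powr k * u (\<rho> powr p)) = 0" .
  next
    show "continuous_on {0<..} (\<lambda>\<rho>. k * (k - 1) * \<rho> powr (k - 2) * u (\<rho> powr p)
            + p\<^sup>2 * \<rho> powr (k + 2 * p - 2) * u'' (\<rho> powr p))"
      by (intro continuous_intros continuous_on_compose2[OF u_cont powr_cont powr_maps]
            continuous_on_compose2[OF u''_cont powr_cont powr_maps]) auto
  qed
qed

lemma power2_mult_powr_rescale:
  fixes \<rho> :: real
  assumes \<rho>: "\<rho> > 0" and exponents: "p * (c + 2) = d + 2"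
  shows "(\<rho> powr p)\<^sup>2 * (\<rho> powr p) powr c = \<rho>\<^sup>2 * \<rho> powr d"
proof -
  have "(\<rho> powr p)\<^sup>2 * (\<rho> powr p) powr c = (\<rho> powr p) powr (c + 2)"
    by (rule power2_mult_powr) (use \<rho> in simp)
  also have "\<dots> = \<rho> powr (d + 2)"
    by (simp add: powr_powr exponents)
  also have "\<dots> = \<rho>\<^sup>2 * \<rho> powr d"
    by (rule power2_mult_powr[OF \<rho>, symmetric])
  finally show ?thesis .
qed

lemma powr_potentials_rescale:
  fixes \<rho> :: real
  assumes \<rho>: "\<rho> > 0"
    and exponents: "p * (c\<^sub>1 + 2) = 2" "2 * p = d\<^sub>1 + 2" "p * (c\<^sub>2 + 2) = d\<^sub>2 + 2"
    and coupling: "p\<^sup>2 * \<xi> = - EE" "p\<^sup>2 * E = - \<eta>"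
  shows "\<rho>\<^sup>2 * (EE - (\<eta> * \<rho> powr d\<^sub>1 + \<mu> * p\<^sup>2 * \<rho> powr d\<^sub>2))
       = p\<^sup>2 * (\<rho> powr p)\<^sup>2 * (E - (\<xi> * (\<rho> powr p) powr c\<^sub>1 + \<mu> * (\<rho> powr p) powr c\<^sub>2))"
proof -
  define R where "R = \<rho> powr p"
  have rescale: "R\<^sup>2 * R powr c\<^sub>1 = \<rho>\<^sup>2" "R\<^sup>2 * R powr c\<^sub>2 = \<rho>\<^sup>2 * \<rho> powr d\<^sub>2"
      "R\<^sup>2 = \<rho>\<^sup>2 * \<rho> powr d\<^sub>1"
    using power2_mult_powr_rescale[OF \<rho>, of p c\<^sub>1 0] power2_mult_powr_rescale[OF \<rho> exponents(3)]
      power2_mult_powr_rescale[OF \<rho>, of p 0 d\<^sub>1] exponents(1,2) \<rho>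
    by (simp_all add: R_def)
  have "\<rho>\<^sup>2 * (EE - (\<eta> * \<rho> powr d\<^sub>1 + \<mu> * p\<^sup>2 * \<rho> powr d\<^sub>2))
      = EE * \<rho>\<^sup>2 - \<eta> * (\<rho>\<^sup>2 * \<rho> powr d\<^sub>1) - \<mu> * p\<^sup>2 * (\<rho>\<^sup>2 * \<rho> powr d\<^sub>2)"
    by (simp add: algebra_simps)
  also have "\<dots> = - (p\<^sup>2 * \<xi>) * (R\<^sup>2 * R powr c\<^sub>1) + (p\<^sup>2 * E) * R\<^sup>2 - \<mu> * p\<^sup>2 * (R\<^sup>2 * R powr c\<^sub>2)"
    unfolding coupling by (simp only: rescale(1,2)) (simp add: rescale(3))
  also have "\<dots> = p\<^sup>2 * R\<^sup>2 * (E - (\<xi> * R powr c\<^sub>1 + \<mu> * R powr c\<^sub>2))"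
    by (simp add: algebra_simps)
  finally show ?thesis
    unfolding R_def .
qed

lemma newton_dual_sqrt:
  assumes dual: "newton_dual \<alpha> \<beta>"
  shows "newton_dual (2 * sqrt ((\<alpha> + 3) / 2) - 3) (2 * sqrt ((\<beta> + 3) / 2) - 3)"
proof -
  have "(\<alpha> + 3) / 2 = inverse ((\<beta> + 3) / 2)"
    using dual unfolding newton_dual_def inverse_divide .
  then have "sqrt ((\<alpha> + 3) / 2) = inverse (sqrt ((\<beta> + 3) / 2))"
    by (simp only: real_sqrt_inverse)
  then show ?thesis
    unfolding newton_dual_def by (simp add: inverse_eq_divide)
qed

theorem mainTheorem6:
  fixes a A \<xi> \<eta> \<mu> EE E l ll :: real and u :: "real \<Rightarrow> real"
  assumes "a + 3 > 0"
    and "(a + 3) / 2 = 2 / (A + 3)"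
    and "l + 1/2 = 2 / (A + 3) * (ll + 1/2)"
    and "\<xi> = - EE * (2 / (A + 3))\<^sup>2"
    and "E = - \<eta> * (2 / (A + 3))\<^sup>2"
    and "solves_radial
           (\<lambda>r. \<xi> * r powr (a + 1) + \<mu> * r powr (2 * (sqrt ((a + 3) / 2) - 1))) E l u"
  shows "solves_radial
           (\<lambda>\<rho>. \<eta> * \<rho> powr (A + 1)
                 + \<mu> * ((A + 3) / 2)\<^sup>2 * \<rho> powr (2 * (sqrt ((A + 3) / 2) - 1)))
           EE ll (\<lambda>\<rho>. \<rho> powr (- (A + 1) / 4) * u (\<rho> powr ((A + 3) / 2)))
       \<and> newton_dual a A
       \<and> newton_dual (2 * sqrt ((a + 3) / 2) - 3) (2 * sqrt ((A + 3) / 2) - 3)"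
proof -
  define p where "p = (A + 3) / 2"
  have dual: "newton_dual a A"
    unfolding newton_dual_def by (fact assms(2))
  have inv_p: "2 / (A + 3) = inverse p"
    unfolding p_def inverse_divide by simp
  have a_p: "(a + 3) / 2 = inverse p"
    using assms(2) unfolding inv_p .
  have p: "p > 0"
    using assms(1) a_p by (metis inverse_positive_iff_positive half_gt_zero)
  have sqrt_a: "sqrt ((a + 3) / 2) * p = sqrt p"
    unfolding a_p real_sqrt_inverse using p
    by (metis less_eq_real_def real_div_sqrt divide_inverse_commute)
  have angular: "p * (l + 1/2) = ll + 1/2"
    using p by (simp add: assms(3)[unfolded inv_p])
  have coupling: "p\<^sup>2 * \<xi> = - EE" "p\<^sup>2 * E = - \<eta>"
    using p by (simp_all add: assms(4,5) inv_p power_inverse)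
  have potential: "\<rho>\<^sup>2 * (EE - (\<eta> * \<rho> powr (A + 1) + \<mu> * p\<^sup>2 * \<rho> powr (2 * (sqrt p - 1))))
      = p\<^sup>2 * (\<rho> powr p)\<^sup>2 * (E - (\<xi> * (\<rho> powr p) powr (a + 1)
          + \<mu> * (\<rho> powr p) powr (2 * (sqrt ((a + 3) / 2) - 1))))"
    if "\<rho> > 0" for \<rho>
  proof (rule powr_potentials_rescale[OF that _ _ _ coupling])
    show "p * (a + 1 + 2) = 2"
      using a_p p by (simp add: field_simps)
    show "2 * p = A + 1 + 2"
      by (simp add: p_def)
    show "p * (2 * (sqrt ((a + 3) / 2) - 1) + 2) = 2 * (sqrt p - 1) + 2"
      using sqrt_a by (simp add: algebra_simps)
  qed
  have exponent: "- (A + 1) / 4 = (1 - p) / 2"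
    by (simp add: p_def field_simps)
  have "solves_radial
           (\<lambda>\<rho>. \<eta> * \<rho> powr (A + 1) + \<mu> * p\<^sup>2 * \<rho> powr (2 * (sqrt p - 1)))
           EE ll (\<lambda>\<rho>. \<rho> powr (- (A + 1) / 4) * u (\<rho> powr p))"
    unfolding exponent by (rule solves_radial_liouville_transform[OF assms(6) p angular potential])
  then show ?thesis
    unfolding p_def using dual newton_dual_sqrt[OF dual] by blast
qed

end
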